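(* Let $X$ be an algebraic variety, $t\in\mathcal{T}(X)$ and $s\in\mathcal{S}(X)$. Then $t\cdot s\in\mathcal{S}(X)$.
   Context: An affine algebraic variety is a topological space with a sheaf of real-valued functions isomorphic as a ringed space (via a "closed embedding" $i$) to an algebraic set $Y\subset\mathbb{R}^n$ (common zero locus of real polynomials) with its Zariski topology and sheaf of regular functions. An algebraic variety is a topological space with a sheaf of real-valued functions admitting a finite open cover by affine algebraic varieties. For affine $X$: $\mathcal{S}(X)$ is the space of $f$ such that $f\circ i^{-1}$ is the restriction to $i(X)$ of a classical Schwartz function on $\mathbb{R}^n$; $\mathcal{T}(X)$ is the space of $f$ such that $f\circ i^{-1}$ is the restriction of a tempered function on $\mathbb{R}^n$ (a smooth function all of whose partial derivatives are bounded by $C(1+|x|^2)^N$ for some $C,N$); both are independent of $i$. For a general algebraic variety $X$ with a finite affine open cover $X=\bigcup_{i=1}^kX_i$: $\mathcal{S}(X)$ is the set of functions $\sum_{i=1}^k\mathrm{Ext}_{X_i}^X(s_i)$, $s_i\in\mathcal{S}(X_i)$, $\mathrm{Ext}$ = extension by zero (independent of the cover); $\mathcal{T}(X)$ is the set of $t:X\to\mathbb{R}$ with $t|_{X_i}\in\mathcal{T}(X_i)$ for all $i$ (for some, equivalently every, finite affine open cover). *)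

theory Defs
  imports "HOL-Analysis.Analysis"
begin

text \<open>A point of R^n is represented as a function nat => real vanishing at indices >= n.\<close>

definition Rn :: "nat \<Rightarrow> (nat \<Rightarrow> real) set" where
  "Rn n = {x. \<forall>i\<ge>n. x i = 0}"

definition sqnorm :: "nat \<Rightarrow> (nat \<Rightarrow> real) \<Rightarrow> real" where
  "sqnorm n x = (\<Sum>i<n. (x i)\<^sup>2)"

inductive_set polys :: "nat \<Rightarrow> ((nat \<Rightarrow> real) \<Rightarrow> real) set" for n :: nat where
  const: "(\<lambda>x. c) \<in> polys n"
| var: "i < n \<Longrightarrow> (\<lambda>x. x i) \<in> polys n"
| add: "p \<in> polys n \<Longrightarrow> q \<in> polys n \<Longrightarrow> (\<lambda>x. p x + q x) \<in> polys n"
| mult: "p \<in> polys n \<Longrightarrow> q \<in> polys n \<Longrightarrow> (\<lambda>x. p x * q x) \<in> polys n"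

definition algebraic_set :: "nat \<Rightarrow> (nat \<Rightarrow> real) set \<Rightarrow> bool" where
  "algebraic_set n Y \<longleftrightarrow> (\<exists>P \<subseteq> polys n. Y = {x \<in> Rn n. \<forall>p\<in>P. p x = 0})"

definition zariski :: "nat \<Rightarrow> (nat \<Rightarrow> real) set \<Rightarrow> (nat \<Rightarrow> real) topology" where
  "zariski n Y = topology (\<lambda>U. U \<subseteq> Y \<and>
      (\<exists>P \<subseteq> polys n. Y - U = {x \<in> Y. \<forall>p\<in>P. p x = 0}))"

definition regular :: "nat \<Rightarrow> (nat \<Rightarrow> real) set \<Rightarrow> (nat \<Rightarrow> real) set \<Rightarrow> ((nat \<Rightarrow> real) \<Rightarrow> real) set" where
  "regular n Y U = {f. \<forall>x\<in>U. \<exists>V p q. openin (zariski n Y) V \<and> x \<in> V \<and> V \<subseteq> U \<and>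
      p \<in> polys n \<and> q \<in> polys n \<and> (\<forall>y\<in>V. q y \<noteq> 0 \<and> f y = p y / q y)}"

text \<open>A structure is a topology T together with Fs, assigning to each open U
  a set of functions (only their values on U matter).\<close>

definition sheaf_fns :: "'a topology \<Rightarrow> ('a set \<Rightarrow> ('a \<Rightarrow> real) set) \<Rightarrow> bool" where
  "sheaf_fns T Fs \<longleftrightarrow>
     (\<forall>U V f. openin T U \<and> openin T V \<and> V \<subseteq> U \<and> f \<in> Fs U \<longrightarrow> f \<in> Fs V) \<and>
     (\<forall>\<U> f. (\<forall>V\<in>\<U>. openin T V) \<and> (\<forall>V\<in>\<U>. \<exists>g\<in>Fs V. \<forall>x\<in>V. g x = f x)
        \<longrightarrow> (\<exists>g\<in>Fs (\<Union>\<U>). \<forall>x\<in>\<Union>\<U>. g x = f x))"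

definition ringed_iso :: "'a topology \<Rightarrow> ('a set \<Rightarrow> ('a \<Rightarrow> real) set)
     \<Rightarrow> 'b topology \<Rightarrow> ('b set \<Rightarrow> ('b \<Rightarrow> real) set) \<Rightarrow> ('a \<Rightarrow> 'b) \<Rightarrow> bool" where
  "ringed_iso T Fs T' Fs' \<phi> \<longleftrightarrow> homeomorphic_map T T' \<phi> \<and>
     (\<forall>U. openin T U \<longrightarrow> (\<forall>f. (\<exists>g\<in>Fs U. \<forall>x\<in>U. g x = f x) \<longleftrightarrow>
                                  (\<exists>g\<in>Fs' (\<phi> ` U). \<forall>x\<in>U. g (\<phi> x) = f x)))"

definition closed_embedding :: "nat \<Rightarrow> 'a topology \<Rightarrow> ('a set \<Rightarrow> ('a \<Rightarrow> real) set)
     \<Rightarrow> ('a \<Rightarrow> (nat \<Rightarrow> real)) \<Rightarrow> bool" where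
  "closed_embedding n T Fs i \<longleftrightarrow>
     (\<exists>Y. algebraic_set n Y \<and> ringed_iso T Fs (zariski n Y) (regular n Y) i)"

definition affine_variety :: "'a topology \<Rightarrow> ('a set \<Rightarrow> ('a \<Rightarrow> real) set) \<Rightarrow> bool" where
  "affine_variety T Fs \<longleftrightarrow> sheaf_fns T Fs \<and> (\<exists>n i. closed_embedding n T Fs i)"

definition affine_cover :: "'a topology \<Rightarrow> ('a set \<Rightarrow> ('a \<Rightarrow> real) set) \<Rightarrow> 'a set set \<Rightarrow> bool" where
  "affine_cover T Fs \<U> \<longleftrightarrow> finite \<U> \<and> \<Union>\<U> = topspace T \<and>
     (\<forall>U\<in>\<U>. openin T U \<and> affine_variety (subtopology T U) Fs)"

definition algebraic_variety :: "'a topology \<Rightarrow> ('a set \<Rightarrow> ('a \<Rightarrow> real) set) \<Rightarrow> bool" where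
  "algebraic_variety T Fs \<longleftrightarrow> sheaf_fns T Fs \<and> (\<exists>\<U>. affine_cover T Fs \<U>)"

definition pd :: "nat \<Rightarrow> ((nat \<Rightarrow> real) \<Rightarrow> real) \<Rightarrow> (nat \<Rightarrow> real) \<Rightarrow> real" where
  "pd i f x = deriv (\<lambda>h. f (x(i := x i + h))) 0"

fun pds :: "nat list \<Rightarrow> ((nat \<Rightarrow> real) \<Rightarrow> real) \<Rightarrow> (nat \<Rightarrow> real) \<Rightarrow> real" where
  "pds [] f = f"
| "pds (i # is) f = pd i (pds is f)"

definition smooth_Rn :: "nat \<Rightarrow> ((nat \<Rightarrow> real) \<Rightarrow> real) \<Rightarrow> bool" where
  "smooth_Rn n f \<longleftrightarrow> (\<forall>is. set is \<subseteq> {..<n} \<longrightarrow>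
      continuous_on (Rn n) (pds is f) \<and>
      (\<forall>i<n. \<forall>x\<in>Rn n. \<exists>D. ((\<lambda>h. pds is f (x(i := x i + h))) has_real_derivative D) (at 0)))"

definition schwartz_Rn :: "nat \<Rightarrow> ((nat \<Rightarrow> real) \<Rightarrow> real) \<Rightarrow> bool" where
  "schwartz_Rn n f \<longleftrightarrow> smooth_Rn n f \<and>
     (\<forall>is (N::nat). set is \<subseteq> {..<n} \<longrightarrow>
        (\<exists>C. \<forall>x\<in>Rn n. (1 + sqnorm n x) ^ N * \<bar>pds is f x\<bar> \<le> C))"

definition tempered_Rn :: "nat \<Rightarrow> ((nat \<Rightarrow> real) \<Rightarrow> real) \<Rightarrow> bool" where
  "tempered_Rn n f \<longleftrightarrow> smooth_Rn n f \<and>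
     (\<forall>is. set is \<subseteq> {..<n} \<longrightarrow>
        (\<exists>C (N::nat). \<forall>x\<in>Rn n. \<bar>pds is f x\<bar> \<le> C * (1 + sqnorm n x) ^ N))"

definition S_aff :: "'a topology \<Rightarrow> ('a set \<Rightarrow> ('a \<Rightarrow> real) set) \<Rightarrow> ('a \<Rightarrow> real) set" where
  "S_aff T Fs = {f. \<forall>n i. closed_embedding n T Fs i \<longrightarrow>
      (\<exists>F. schwartz_Rn n F \<and> (\<forall>x\<in>topspace T. f x = F (i x)))}"

definition T_aff :: "'a topology \<Rightarrow> ('a set \<Rightarrow> ('a \<Rightarrow> real) set) \<Rightarrow> ('a \<Rightarrow> real) set" where
  "T_aff T Fs = {f. \<forall>n i. closed_embedding n T Fs i \<longrightarrow>
      (\<exists>F. tempered_Rn n F \<and> (\<forall>x\<in>topspace T. f x = F (i x)))}"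

definition schwartz_fns :: "'a topology \<Rightarrow> ('a set \<Rightarrow> ('a \<Rightarrow> real) set) \<Rightarrow> ('a \<Rightarrow> real) set" where
  "schwartz_fns T Fs = {f. \<exists>\<U> s. affine_cover T Fs \<U> \<and>
      (\<forall>U\<in>\<U>. s U \<in> S_aff (subtopology T U) Fs) \<and>
      (\<forall>x\<in>topspace T. f x = (\<Sum>U\<in>\<U>. if x \<in> U then s U x else 0))}"

definition tempered_fns :: "'a topology \<Rightarrow> ('a set \<Rightarrow> ('a \<Rightarrow> real) set) \<Rightarrow> ('a \<Rightarrow> real) set" where
  "tempered_fns T Fs = {f. \<forall>\<U>. affine_cover T Fs \<U> \<longrightarrow>
      (\<forall>U\<in>\<U>. f \<in> T_aff (subtopology T U) Fs)}"

end

theory Submission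
  imports Defs
begin

text \<open>On each affine chart, t and s are restrictions of a tempered function G and a Schwartz
  function H on R^n, and G H is Schwartz: by the Leibniz rule every iterated partial derivative
  of G H is a finite sum of products of a derivative of G, of polynomial growth, with a derivative
  of H, of rapid decay. Multiplying the chartwise summands of s by t then exhibits t s as a sum
  of extensions by zero of Schwartz functions.\<close>

lemma Rn_fun_upd: "x \<in> Rn n \<Longrightarrow> i < n \<Longrightarrow> x(i := v) \<in> Rn n"
  by (auto simp: Rn_def)

lemma sqnorm_nonneg: "0 \<le> sqnorm n x"
  unfolding sqnorm_def by (simp add: sum_nonneg)

lemma DERIV_sum_list:
  assumes "\<And>p. p \<in> set L \<Longrightarrow> (f p has_real_derivative f' p) (at x)"
  shows "((\<lambda>y. \<Sum>p\<leftarrow>L. f p y) has_real_derivative (\<Sum>p\<leftarrow>L. f' p)) (at x)"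
  using assms by (induction L) (auto intro!: DERIV_add)

lemma continuous_on_sum_list:
  fixes f :: "'b \<Rightarrow> 'a::topological_space \<Rightarrow> 'c::topological_monoid_add"
  assumes "\<And>p. p \<in> set L \<Longrightarrow> continuous_on A (f p)"
  shows "continuous_on A (\<lambda>y. \<Sum>p\<leftarrow>L. f p y)"
  using assms by (induction L) (auto intro!: continuous_on_add)

lemma weighted_bounded_sum_list:
  fixes w :: "'a \<Rightarrow> real"
  assumes "\<And>p. p \<in> set L \<Longrightarrow> \<exists>C. \<forall>x\<in>A. w x * \<bar>f p x\<bar> \<le> C"
    and "\<And>x. x \<in> A \<Longrightarrow> 0 \<le> w x"
  shows "\<exists>C. \<forall>x\<in>A. w x * \<bar>\<Sum>p\<leftarrow>L. f p x\<bar> \<le> C"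
  using assms(1)
proof (induction L)
  case Nil
  then show ?case by auto
next
  case (Cons p L)
  obtain C1 where C1: "\<forall>x\<in>A. w x * \<bar>f p x\<bar> \<le> C1"
    using Cons.prems by auto
  obtain C2 where C2: "\<forall>x\<in>A. w x * \<bar>\<Sum>q\<leftarrow>L. f q x\<bar> \<le> C2"
    using Cons by auto
  have "w x * \<bar>\<Sum>q\<leftarrow>p # L. f q x\<bar> \<le> C1 + C2" if "x \<in> A" for x
  proof -
    have "w x * \<bar>\<Sum>q\<leftarrow>p # L. f q x\<bar> \<le> w x * \<bar>f p x\<bar> + w x * \<bar>\<Sum>q\<leftarrow>L. f q x\<bar>"
      using assms(2)[OF that] by (simp add: abs_triangle_ineq mult_left_mono flip: distrib_left)
    then show ?thesis
      using C1 C2 that by fastforce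
  qed
  then show ?case by blast
qed

lemma polynomial_growth_times_decay:
  fixes w g h :: real
  assumes "0 \<le> w" "\<bar>g\<bar> \<le> C * w ^ M" "w ^ (N + M) * \<bar>h\<bar> \<le> D"
  shows "w ^ N * \<bar>g * h\<bar> \<le> \<bar>C\<bar> * D"
proof -
  have "\<bar>g\<bar> \<le> \<bar>C\<bar> * w ^ M"
    using assms(1,2) by (smt (verit, best) mult_right_mono zero_le_power)
  then have "w ^ N * \<bar>g * h\<bar> \<le> w ^ N * (\<bar>C\<bar> * w ^ M * \<bar>h\<bar>)"
    by (simp add: abs_mult assms(1) mult_left_mono mult_right_mono)
  also have "\<dots> = \<bar>C\<bar> * (w ^ (N + M) * \<bar>h\<bar>)"
    by (simp add: power_add algebra_simps)
  also have "\<dots> \<le> \<bar>C\<bar> * D"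
    using assms(3) by (simp add: mult_left_mono)
  finally show ?thesis .
qed

lemma pds_has_real_derivative:
  assumes "smooth_Rn n G" "set is \<subseteq> {..<n}" "i < n" "x \<in> Rn n"
  shows "((\<lambda>h. pds is G (x(i := x i + h))) has_real_derivative pds (i # is) G x) (at 0)"
proof -
  obtain D where D: "((\<lambda>h. pds is G (x(i := x i + h))) has_real_derivative D) (at 0)"
    using assms unfolding smooth_Rn_def by blast
  moreover have "pds (i # is) G x = D"
    using DERIV_imp_deriv[OF D] by (simp add: pd_def)
  ultimately show ?thesis by simp
qed

text \<open>The pairs (a, b) of the Leibniz rule for the derivative along is, listed with
  multiplicity: each direction in is goes either to the first or to the second factor.\<close>

fun leibniz_pairs :: "nat list \<Rightarrow> (nat list \<times> nat list) list" where
  "leibniz_pairs [] = [([], [])]"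
| "leibniz_pairs (i # is) =
     map (\<lambda>(a, b). (i # a, b)) (leibniz_pairs is) @ map (\<lambda>(a, b). (a, i # b)) (leibniz_pairs is)"

lemma leibniz_pairs_subset:
  "(a, b) \<in> set (leibniz_pairs is) \<Longrightarrow> set a \<subseteq> set is \<and> set b \<subseteq> set is"
  by (induction "is" arbitrary: a b) fastforce+

definition leibniz_sum ::
  "((nat \<Rightarrow> real) \<Rightarrow> real) \<Rightarrow> ((nat \<Rightarrow> real) \<Rightarrow> real) \<Rightarrow> nat list \<Rightarrow> (nat \<Rightarrow> real) \<Rightarrow> real" where
  "leibniz_sum G H is x = (\<Sum>(a, b)\<leftarrow>leibniz_pairs is. pds a G x * pds b H x)"

lemma leibniz_sum_has_real_derivative:
  assumes "smooth_Rn n G" "smooth_Rn n H" "set is \<subseteq> {..<n}" "i < n" "x \<in> Rn n"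
  shows "((\<lambda>h. leibniz_sum G H is (x(i := x i + h))) has_real_derivative
           leibniz_sum G H (i # is) x) (at 0)"
proof -
  have "((\<lambda>h. leibniz_sum G H is (x(i := x i + h))) has_real_derivative
      (\<Sum>(a, b)\<leftarrow>leibniz_pairs is. pds (i # a) G x * pds b H x + pds a G x * pds (i # b) H x)) (at 0)"
    unfolding leibniz_sum_def
  proof (rule DERIV_sum_list, clarify)
    fix a b assume "(a, b) \<in> set (leibniz_pairs is)"
    then have "set a \<subseteq> {..<n}" "set b \<subseteq> {..<n}"
      using leibniz_pairs_subset assms(3) by blast+
    from DERIV_mult[OF pds_has_real_derivative[OF assms(1) this(1) assms(4,5)]
                       pds_has_real_derivative[OF assms(2) this(2) assms(4,5)]]
    show "((\<lambda>h. pds a G (x(i := x i + h)) * pds b H (x(i := x i + h))) has_real_derivative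
        pds (i # a) G x * pds b H x + pds a G x * pds (i # b) H x) (at 0)"
      by (simp add: algebra_simps)
  qed
  then show ?thesis
    by (simp add: leibniz_sum_def sum_list_addf case_prod_unfold o_def)
qed

lemma pds_mult_eq_leibniz_sum:
  assumes "smooth_Rn n G" "smooth_Rn n H" "set is \<subseteq> {..<n}" "x \<in> Rn n"
  shows "pds is (\<lambda>y. G y * H y) x = leibniz_sum G H is x"
  using assms(3,4)
proof (induction "is" arbitrary: x)
  case Nil
  then show ?case by (simp add: leibniz_sum_def)
next
  case (Cons i js)
  have i: "i < n" and js: "set js \<subseteq> {..<n}"
    using Cons.prems by auto
  have "pds (i # js) (\<lambda>y. G y * H y) x = deriv (\<lambda>h. leibniz_sum G H js (x(i := x i + h))) 0"
    using Cons.IH[OF js Rn_fun_upd[OF Cons.prems(2) i]] by (simp add: pd_def del: fun_upd_apply)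
  also have "\<dots> = leibniz_sum G H (i # js) x"
    by (rule DERIV_imp_deriv[OF leibniz_sum_has_real_derivative[OF assms(1,2) js i Cons.prems(2)]])
  finally show ?case .
qed

lemma smooth_Rn_mult:
  assumes "smooth_Rn n G" "smooth_Rn n H"
  shows "smooth_Rn n (\<lambda>y. G y * H y)"
  unfolding smooth_Rn_def
proof (intro allI impI conjI ballI)
  fix "is" assume "is": "set is \<subseteq> {..<n}"
  have "continuous_on (Rn n) (leibniz_sum G H is)"
    unfolding leibniz_sum_def
  proof (rule continuous_on_sum_list, clarify)
    fix a b assume "(a, b) \<in> set (leibniz_pairs is)"
    then have "set a \<subseteq> {..<n}" "set b \<subseteq> {..<n}"
      using leibniz_pairs_subset "is" by blast+
    then show "continuous_on (Rn n) (\<lambda>x. pds a G x * pds b H x)"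
      using assms unfolding smooth_Rn_def by (auto intro!: continuous_on_mult)
  qed
  then show "continuous_on (Rn n) (pds is (\<lambda>y. G y * H y))"
    using pds_mult_eq_leibniz_sum[OF assms "is"] by (simp cong: continuous_on_cong)
  fix i x assume i: "i < n" and x: "x \<in> Rn n"
  have "(\<lambda>h. pds is (\<lambda>y. G y * H y) (x(i := x i + h))) = (\<lambda>h. leibniz_sum G H is (x(i := x i + h)))"
    using pds_mult_eq_leibniz_sum[OF assms "is" Rn_fun_upd[OF x i]] by simp
  then show "\<exists>D. ((\<lambda>h. pds is (\<lambda>y. G y * H y) (x(i := x i + h))) has_real_derivative D) (at 0)"
    using leibniz_sum_has_real_derivative[OF assms "is" i x] by auto
qed

lemma schwartz_Rn_mult:
  assumes "tempered_Rn n G" "schwartz_Rn n H"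
  shows "schwartz_Rn n (\<lambda>y. G y * H y)"
proof -
  have G: "smooth_Rn n G" and H: "smooth_Rn n H"
    using assms unfolding tempered_Rn_def schwartz_Rn_def by auto
  have "\<exists>C. \<forall>x\<in>Rn n. (1 + sqnorm n x) ^ N * \<bar>pds is (\<lambda>y. G y * H y) x\<bar> \<le> C"
    if "is": "set is \<subseteq> {..<n}" for "is" N
  proof -
    have "\<exists>C. \<forall>x\<in>Rn n. (1 + sqnorm n x) ^ N * \<bar>leibniz_sum G H is x\<bar> \<le> C"
      unfolding leibniz_sum_def
    proof (rule weighted_bounded_sum_list, clarify)
      fix a b assume "(a, b) \<in> set (leibniz_pairs is)"
      then have "set a \<subseteq> {..<n}" "set b \<subseteq> {..<n}"
        using leibniz_pairs_subset "is" by blast+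
      then obtain Ca M Cb where
        "\<forall>x\<in>Rn n. \<bar>pds a G x\<bar> \<le> Ca * (1 + sqnorm n x) ^ M"
        "\<forall>x\<in>Rn n. (1 + sqnorm n x) ^ (N + M) * \<bar>pds b H x\<bar> \<le> Cb"
        using assms unfolding tempered_Rn_def schwartz_Rn_def by meson
      then show "\<exists>C. \<forall>x\<in>Rn n. (1 + sqnorm n x) ^ N * \<bar>pds a G x * pds b H x\<bar> \<le> C"
        using sqnorm_nonneg by (metis add_nonneg_nonneg zero_le_one polynomial_growth_times_decay)
    qed (simp add: sqnorm_nonneg add_nonneg_nonneg)
    then show ?thesis
      using pds_mult_eq_leibniz_sum[OF G H "is"] by simp
  qed
  then show ?thesis
    unfolding schwartz_Rn_def using smooth_Rn_mult[OF G H] by blast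
qed

lemma S_aff_mult:
  assumes "t \<in> T_aff X Fs" "s \<in> S_aff X Fs"
  shows "(\<lambda>x. t x * s x) \<in> S_aff X Fs"
  unfolding S_aff_def
proof (intro CollectI allI impI)
  fix n i assume "closed_embedding n X Fs i"
  then obtain G H where "tempered_Rn n G" "\<forall>x\<in>topspace X. t x = G (i x)"
    and "schwartz_Rn n H" "\<forall>x\<in>topspace X. s x = H (i x)"
    using assms unfolding T_aff_def S_aff_def by blast
  then show "\<exists>F. schwartz_Rn n F \<and> (\<forall>x\<in>topspace X. t x * s x = F (i x))"
    using schwartz_Rn_mult by fastforce
qed

theorem proposition5p6:
  fixes X :: "'a topology" and Fs :: "'a set \<Rightarrow> ('a \<Rightarrow> real) set"
    and t s :: "'a \<Rightarrow> real"
  assumes "algebraic_variety X Fs"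
    and "t \<in> tempered_fns X Fs"
    and "s \<in> schwartz_fns X Fs"
  shows "(\<lambda>x. t x * s x) \<in> schwartz_fns X Fs"
proof -
  \<comment> \<open>The affine cover comes with the representation of s.\<close>
  obtain \<U> s' where cover: "affine_cover X Fs \<U>"
    and s': "\<forall>U\<in>\<U>. s' U \<in> S_aff (subtopology X U) Fs"
    and s_eq: "\<forall>x\<in>topspace X. s x = (\<Sum>U\<in>\<U>. if x \<in> U then s' U x else 0)"
    using assms(3) unfolding schwartz_fns_def by blast
  have "\<forall>U\<in>\<U>. (\<lambda>x. t x * s' U x) \<in> S_aff (subtopology X U) Fs"
    using assms(2) cover s' S_aff_mult unfolding tempered_fns_def by blast
  moreover have "\<forall>x\<in>topspace X. t x * s x = (\<Sum>U\<in>\<U>. if x \<in> U then t x * s' U x else 0)"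
    using s_eq by (auto simp: sum_distrib_left intro!: sum.cong)
  ultimately show ?thesis
    unfolding schwartz_fns_def using cover
    by (intro CollectI exI[of _ \<U>] exI[of _ "\<lambda>U x. t x * s' U x"]) simp
qed

end
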